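(* Let $R$ be any ring and let $x,y\in R$ satisfy $x^2=0$, $y^2=0$, $x\neq 0$, $y\neq 0$. If $x\circ y=x+y-xy$ is nilpotent, then $xy$ is nilpotent.
   Context: Rings are associative and not necessarily unital. *)

theory Defs
  imports Main
begin

text \<open>Positive powers in a possibly non-unital ring (multiplicative semigroup):
  pos_pow x n = x^(n+1).\<close>
fun pos_pow :: "'a::semigroup_mult \<Rightarrow> nat \<Rightarrow> 'a" where
  "pos_pow x 0 = x"
| "pos_pow x (Suc n) = x * pos_pow x n"

definition nilpotent_elem :: "'a::{semigroup_mult,zero} \<Rightarrow> bool" where
  "nilpotent_elem x \<longleftrightarrow> (\<exists>n. pos_pow x n = 0)"

end

theory Submission
  imports Defs
begin

text \<open>Put \<open>z = x + y - xy\<close> and \<open>w = xy\<close>. From \<open>x\<^sup>2 = y\<^sup>2 = 0\<close> one gets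
  \<open>xz = zy = w\<close> and \<open>zx = yx - xyx\<close>, so the elements \<open>a\<^sub>k = x z\<^sup>k\<^sup>+\<^sup>1 y\<close> satisfy
  \<open>a\<^sub>1 = w\<^sup>2\<close> and the recurrence \<open>a\<^sub>k\<^sub>+\<^sub>2 = (a\<^sub>k - a\<^sub>k\<^sub>+\<^sub>1) w\<close>.
  If \<open>z\<close> is nilpotent then \<open>a\<^sub>k = 0\<close> for all large \<open>k\<close>, and a descending induction
  along the recurrence shows \<open>a\<^sub>k w\<^sup>d = 0\<close> once \<open>k + d\<close> is large; for \<open>k = 1\<close> this
  says that \<open>w\<close> is nilpotent.\<close>

lemma pos_pow_Suc_right: "pos_pow (x::'a::semigroup_mult) (Suc n) = pos_pow x n * x"
  by (induction n) (simp_all add: mult.assoc [symmetric])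

lemma pos_pow_eq_0_mono:
  fixes z :: "'a::semiring_0"
  assumes "pos_pow z n = 0" and "n \<le> m"
  shows "pos_pow z m = 0"
  using assms(2)
proof (induction m)
  case 0
  then show ?case using assms(1) by simp
next
  case (Suc m)
  then show ?case using assms(1) by (cases "n = Suc m") auto
qed

lemma recurrence_annihilated_by_pos_pow:
  fixes a :: "nat \<Rightarrow> 'a::ring" and w :: 'a
  assumes rec: "\<And>k. a (Suc (Suc k)) = (a k - a (Suc k)) * w"
    and eventually_0: "\<And>k. n \<le> k \<Longrightarrow> a k = 0"
    and "n \<le> k + d"
  shows "a k * pos_pow w d = 0"
  using assms(3)
proof (induction d arbitrary: k)
  case 0
  then show ?case using eventually_0 by simp
next
  case (Suc d)
  have "a k * w = a (Suc (Suc k)) + a (Suc k) * w"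
    using rec[of k] by (simp add: algebra_simps)
  then have "a k * pos_pow w (Suc d)
      = a (Suc (Suc k)) * pos_pow w d + a (Suc k) * pos_pow w (Suc d)"
    by (simp add: distrib_right flip: mult.assoc)
  also have "a (Suc k) * pos_pow w (Suc d) = (a (Suc k) * pos_pow w d) * w"
    by (simp only: pos_pow_Suc_right mult.assoc)
  finally show ?case
    using Suc.IH[of "Suc (Suc k)"] Suc.IH[of "Suc k"] Suc.prems by simp
qed

context
  fixes x y z :: "'a::ring"
  assumes x_sq: "x * x = 0" and y_sq: "y * y = 0" and z_eq: "z = x + y - x * y"
begin

lemma left_mult_circle: "x * z = x * y"
  using x_sq by (simp add: z_eq algebra_simps flip: mult.assoc)

lemma circle_mult_right: "z * y = x * y"
  using y_sq by (simp add: z_eq algebra_simps mult.assoc)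

lemma circle_mult_left: "z * x = y * x - x * y * x"
  using x_sq by (simp add: z_eq algebra_simps mult.assoc)

lemma sandwich_pos_pow_1: "x * pos_pow z 1 * y = (x * y) * (x * y)"
proof -
  have "x * pos_pow z 1 * y = (x * z) * (z * y)"
    by (simp add: mult.assoc)
  then show ?thesis by (simp only: left_mult_circle circle_mult_right)
qed

lemma sandwich_pos_pow_recurrence:
  "x * pos_pow z (Suc (Suc k)) * y
     = (x * pos_pow z k * y - x * pos_pow z (Suc k) * y) * (x * y)"
proof -
  have next_eq: "x * pos_pow z (Suc k) * y = x * pos_pow z k * x * y"
    using circle_mult_right by (simp only: pos_pow_Suc_right mult.assoc)
  have "x * pos_pow z (Suc (Suc k)) * y = x * pos_pow z k * (z * x) * y"
    using circle_mult_right by (simp only: pos_pow_Suc_right mult.assoc)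
  also have "\<dots> = (x * pos_pow z k * y - x * pos_pow z (Suc k) * y) * (x * y)"
    unfolding circle_mult_left next_eq by (simp add: algebra_simps mult.assoc)
  finally show ?thesis .
qed

end

theorem lemma2p2:
  fixes x y :: "'a::ring"
  assumes "x * x = 0" and "y * y = 0" and "x \<noteq> 0" and "y \<noteq> 0"
    and "nilpotent_elem (x + y - x * y)"
  shows "nilpotent_elem (x * y)"
proof -
  define a where "a k = x * pos_pow (x + y - x * y) k * y" for k
  obtain n where n: "pos_pow (x + y - x * y) n = 0"
    using assms(5) unfolding nilpotent_elem_def by blast
  have "a 1 * pos_pow (x * y) n = 0"
  proof (rule recurrence_annihilated_by_pos_pow)
    show "a (Suc (Suc k)) = (a k - a (Suc k)) * (x * y)" for k
      unfolding a_def using sandwich_pos_pow_recurrence[OF assms(1,2) refl] .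
    show "a k = 0" if "n \<le> k" for k
      unfolding a_def using pos_pow_eq_0_mono[OF n that] by simp
  qed simp
  then have "pos_pow (x * y) (Suc (Suc n)) = 0"
    unfolding a_def sandwich_pos_pow_1[OF assms(1,2) refl] by (simp add: mult.assoc)
  then show ?thesis unfolding nilpotent_elem_def by blast
qed

end
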